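(* Let $\vec s=(s_1,\dots,s_k)\in\mathbb{Z}_+^k$ and let $\pi_1,\pi_2,\pi_3$ be three $\vec s$-multipermutations. Then there is a pair $i<j$ such that \[ \mathrm{LCS}(\pi_i,\pi_j)\geq\Bigl(\tfrac16\sum_{l=1}^k s_l^2\Bigr)^{1/3}. \] Equivalently, $\mathrm{LCS}_2(3,\mathcal P_{\vec s})\geq\bigl(\tfrac16\sum_{l} s_l^2\bigr)^{1/3}$.
   Context: For $\vec s\in\mathbb{Z}_+^k$, an $\vec s$-multipermutation is a word over $\{1,\dots,k\}$ in which each letter $l$ appears exactly $s_l$ times; $\mathcal P_{\vec s}$ is the set of all of them. $\mathrm{LCS}(w,w')$ is the length of a longest common subsequence of words $w,w'$. $\mathrm{LCS}_2(t,\mathcal P_{\vec s})$ is the minimum, over all sets of $t$ distinct elements of $\mathcal P_{\vec s}$, of the maximum $\mathrm{LCS}$ of two distinct members of the set. *)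

theory Defs
  imports Complex_Main "HOL-Library.Sublist"
begin

definition multiperm :: "nat \<Rightarrow> (nat \<Rightarrow> nat) \<Rightarrow> nat list \<Rightarrow> bool" where
  "multiperm k s w \<longleftrightarrow> set w \<subseteq> {1..k} \<and> (\<forall>l\<in>{1..k}. count_list w l = s l)"

definition LCS :: "'a list \<Rightarrow> 'a list \<Rightarrow> nat" where
  "LCS w w' = Max {length u | u. subseq u w \<and> subseq u w'}"

end

theory Submission
  imports Defs "HOL-Library.Product_Lexorder"
begin

text \<open>Label each triple (i, j, k) of positions carrying the same letter l in the three words
  by its profile: the LCS lengths of the pairs of prefixes ending at i, j, k. Profiles lie in
  [1, L12] \<times> [1, L13] \<times> [1, L23], where Lab is the LCS of words a and b. Triples of distinct
  letters never share a profile, and appending a common letter strictly increases an LCS, so the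
  triples of one letter sharing a profile form a set no two of whose members are comparable in
  two coordinates; such a set has at most s_l + s_l + s_l elements. Counting the s_l^3 triples of
  each letter gives \<Sum> s_l^2 \<le> 3 L12 L13 L23.\<close>

fun below_in_two :: "'a::order \<times> 'b::order \<times> 'c::order \<Rightarrow> 'a \<times> 'b \<times> 'c \<Rightarrow> bool" where
  "below_in_two (a, b, c) (a', b', c') \<longleftrightarrow>
     (a < a' \<and> b < b') \<or> (a < a' \<and> c < c') \<or> (b < b' \<and> c < c')"

definition antichain2 :: "('a::order \<times> 'b::order \<times> 'c::order) set \<Rightarrow> bool" where
  "antichain2 S \<longleftrightarrow> (\<forall>x\<in>S. \<forall>y\<in>S. \<not> below_in_two x y)"

text \<open>Pairs are ordered lexicographically, so each disjunct says that (a, b, c) is extremal on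
  one of its three axis-parallel lines.\<close>
lemma antichain2_cover:
  fixes S :: "('a::linorder \<times> 'b::linorder \<times> 'c::linorder) set"
  assumes "antichain2 S" and "(a, b, c) \<in> S"
  shows "(\<forall>b' c'. (a, b', c') \<in> S \<longrightarrow> (b', c') \<le> (b, c))
       \<or> (\<forall>a' c'. (a', b, c') \<in> S \<longrightarrow> (a, c') \<le> (a', c))
       \<or> (\<forall>a' b'. (a', b', c) \<in> S \<longrightarrow> (a, b) \<le> (a', b'))"
proof (rule ccontr)
  assume "\<not> ?thesis"
  then obtain b1 c1 a2 c2 a3 b3 where
    y: "(a, b1, c1) \<in> S" "(b, c) < (b1, c1)" and
    z: "(a2, b, c2) \<in> S" "(a2, c) < (a, c2)" and
    w: "(a3, b3, c) \<in> S" "(a3, b3) < (a, b)"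
    by (meson not_le)
  have "\<not> below_in_two u v" if "u \<in> S" "v \<in> S" for u v
    using assms(1) that by (auto simp: antichain2_def)
  from this[OF assms(2) y(1)] this[OF z(1) assms(2)] this[OF w(1) y(1)]
       this[OF z(1) y(1)] this[OF w(1) z(1)]
  show False using y(2) z(2) w(2) by auto
qed

lemma antichain2_card_le:
  fixes S :: "('a::linorder \<times> 'b::linorder \<times> 'c::linorder) set"
  assumes "antichain2 S" and "S \<subseteq> A \<times> B \<times> C" and "finite A" "finite B" "finite C"
  shows "card S \<le> card A + card B + card C"
proof -
  define S1 where "S1 = {(a, b, c) \<in> S. \<forall>b' c'. (a, b', c') \<in> S \<longrightarrow> (b', c') \<le> (b, c)}"
  define S2 where "S2 = {(a, b, c) \<in> S. \<forall>a' c'. (a', b, c') \<in> S \<longrightarrow> (a, c') \<le> (a', c)}"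
  define S3 where "S3 = {(a, b, c) \<in> S. \<forall>a' b'. (a', b', c) \<in> S \<longrightarrow> (a, b) \<le> (a', b')}"
  have S: "S = S1 \<union> S2 \<union> S3"
  proof (intro equalityI subsetI)
    fix x assume "x \<in> S"
    then obtain a b c where "x = (a, b, c)" "(a, b, c) \<in> S" by (cases x) auto
    then show "x \<in> S1 \<union> S2 \<union> S3"
      using antichain2_cover[OF assms(1)] unfolding S1_def S2_def S3_def by blast
  qed (auto simp: S1_def S2_def S3_def)
  \<comment> \<open>a line contains only one extremal element, so each Si is injectively indexed by one coordinate\<close>
  have "inj_on fst S1" by (rule inj_onI) (fastforce simp: S1_def intro: order.antisym)
  have "inj_on (fst \<circ> snd) S2" by (rule inj_onI) (fastforce simp: S2_def intro: order.antisym)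
  have "inj_on (snd \<circ> snd) S3" by (rule inj_onI) (fastforce simp: S3_def intro: order.antisym)
  have "card S \<le> card S1 + card S2 + card S3"
    unfolding S by (rule order_trans[OF card_Un_le add_right_mono[OF card_Un_le]])
  also have "card S1 = card (fst ` S1)" by (rule card_image[symmetric]) fact
  also have "\<dots> \<le> card A"
    using assms(2,3) by (intro card_mono) (auto simp: S1_def)
  also have "card S2 = card ((fst \<circ> snd) ` S2)" by (rule card_image[symmetric]) fact
  also have "\<dots> \<le> card B"
    using assms(2,4) by (intro card_mono) (auto simp: S2_def)
  also have "card S3 = card ((snd \<circ> snd) ` S3)" by (rule card_image[symmetric]) fact
  also have "\<dots> \<le> card C"
    using assms(2,5) by (intro card_mono) (auto simp: S3_def)
  finally show ?thesis by simp
qed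

lemma finite_common_subseq_lengths:
  "finite {length u | u. subseq u w \<and> subseq u w'}"
  by (rule finite_subset[of _ "{..length w}"]) (auto intro: list_emb_length)

lemma length_le_LCS: "subseq u w \<Longrightarrow> subseq u w' \<Longrightarrow> length u \<le> LCS w w'"
  unfolding LCS_def by (rule Max_ge[OF finite_common_subseq_lengths]) auto

lemma LCS_witness:
  obtains u where "subseq u w" "subseq u w'" "length u = LCS w w'"
proof -
  have "LCS w w' \<in> {length u | u. subseq u w \<and> subseq u w'}"
    unfolding LCS_def by (rule Max_in[OF finite_common_subseq_lengths]) auto
  then show ?thesis using that by auto
qed

lemma LCS_mono:
  assumes "subseq w w1" "subseq v v1"
  shows "LCS w v \<le> LCS w1 v1"
proof -
  obtain u where "subseq u w" "subseq u v" "length u = LCS w v" by (rule LCS_witness)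
  with assms show ?thesis by (metis length_le_LCS subseq_order.trans)
qed

lemma LCS_less_LCS_snoc: "LCS w v < LCS (w @ [x]) (v @ [x])"
proof -
  obtain u where "subseq u w" "subseq u v" "length u = LCS w v" by (rule LCS_witness)
  then have "length (u @ [x]) \<le> LCS (w @ [x]) (v @ [x])"
    by (intro length_le_LCS) auto
  with \<open>length u = LCS w v\<close> show ?thesis by simp
qed

text \<open>Positions are 0-based; the two prefixes end with (and include) positions i and j.\<close>
definition prefix_LCS :: "'a list \<Rightarrow> 'a list \<Rightarrow> nat \<Rightarrow> nat \<Rightarrow> nat" where
  "prefix_LCS w v i j = LCS (take (Suc i) w) (take (Suc j) v)"

lemma prefix_LCS_le_LCS: "prefix_LCS w v i j \<le> LCS w v"
  unfolding prefix_LCS_def by (intro LCS_mono prefix_imp_subseq take_is_prefix)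

lemma prefix_LCS_pos:
  assumes "i < length w" "j < length v" "w ! i = v ! j"
  shows "0 < prefix_LCS w v i j"
  using LCS_less_LCS_snoc[of "take i w" "take j v" "w ! i"] assms
  by (simp add: prefix_LCS_def take_Suc_conv_app_nth)

lemma prefix_LCS_strict_mono:
  assumes "i < i'" "j < j'" "i' < length w" "j' < length v" "w ! i' = v ! j'"
  shows "prefix_LCS w v i j < prefix_LCS w v i' j'"
proof -
  have "take (Suc i) w = take (Suc i) (take i' w)" "take (Suc j) v = take (Suc j) (take j' v)"
    using assms(1,2) by (simp_all add: min_def)
  then have "prefix_LCS w v i j \<le> LCS (take i' w) (take j' v)"
    unfolding prefix_LCS_def by (metis LCS_mono prefix_imp_subseq take_is_prefix)
  also have "\<dots> < LCS (take i' w @ [w ! i']) (take j' v @ [v ! j'])"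
    using LCS_less_LCS_snoc[of "take i' w" "take j' v" "w ! i'"] assms(5) by simp
  also have "\<dots> = prefix_LCS w v i' j'"
    using assms(3,4) by (simp add: prefix_LCS_def take_Suc_conv_app_nth)
  finally show ?thesis .
qed

definition positions :: "'a list \<Rightarrow> 'a \<Rightarrow> nat set" where
  "positions w l = {i. i < length w \<and> w ! i = l}"

lemma finite_positions: "finite (positions w l)"
  by (simp add: positions_def)

lemma card_positions: "card (positions w l) = count_list w l"
  by (simp add: positions_def count_list_eq_length_filter length_filter_conv_card eq_commute)

definition common_positions :: "'a list \<Rightarrow> 'a list \<Rightarrow> 'a list \<Rightarrow> 'a \<Rightarrow> (nat \<times> nat \<times> nat) set" where
  "common_positions p1 p2 p3 l = positions p1 l \<times> positions p2 l \<times> positions p3 l"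

lemma finite_common_positions: "finite (common_positions p1 p2 p3 l)"
  by (simp add: common_positions_def finite_positions)

fun lcs_profile :: "'a list \<Rightarrow> 'a list \<Rightarrow> 'a list \<Rightarrow> nat \<times> nat \<times> nat \<Rightarrow> nat \<times> nat \<times> nat" where
  "lcs_profile p1 p2 p3 (i, j, k) = (prefix_LCS p1 p2 i j, prefix_LCS p1 p3 i k, prefix_LCS p2 p3 j k)"

lemma not_below_in_two_if_same_lcs_profile:
  assumes "y \<in> common_positions p1 p2 p3 l"
    and "lcs_profile p1 p2 p3 x = lcs_profile p1 p2 p3 y"
  shows "\<not> below_in_two x y"
proof -
  obtain i j k i' j' k' where xy: "x = (i, j, k)" "y = (i', j', k')" by (metis prod_cases3)
  with assms(1) have "i' < length p1" "j' < length p2" "k' < length p3"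
    and "p1 ! i' = l" "p2 ! j' = l" "p3 ! k' = l"
    by (auto simp: common_positions_def positions_def)
  then show ?thesis
    using assms(2) prefix_LCS_strict_mono[of i i' j j' p1 p2] prefix_LCS_strict_mono[of i i' k k' p1 p3]
      prefix_LCS_strict_mono[of j j' k k' p2 p3]
    unfolding xy by auto
qed

lemma card_common_positions_le:
  "card (common_positions p1 p2 p3 l)
     \<le> card (lcs_profile p1 p2 p3 ` common_positions p1 p2 p3 l)
       * (count_list p1 l + count_list p2 l + count_list p3 l)"
proof -
  let ?T = "common_positions p1 p2 p3 l" and ?F = "lcs_profile p1 p2 p3"
  have fiber: "card {x \<in> ?T. ?F x = z} \<le> count_list p1 l + count_list p2 l + count_list p3 l" for z
  proof -
    have "antichain2 {x \<in> ?T. ?F x = z}"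
      using not_below_in_two_if_same_lcs_profile unfolding antichain2_def by fastforce
    then have "card {x \<in> ?T. ?F x = z} \<le> card (positions p1 l) + card (positions p2 l) + card (positions p3 l)"
      by (rule antichain2_card_le) (auto simp: common_positions_def finite_positions)
    then show ?thesis by (simp add: card_positions)
  qed
  have "card ?T = card (\<Union>z\<in>?F ` ?T. {x \<in> ?T. ?F x = z})"
    by (rule arg_cong[where f = card]) auto
  also have "\<dots> \<le> (\<Sum>z\<in>?F ` ?T. card {x \<in> ?T. ?F x = z})"
    by (rule card_UN_le) (simp add: finite_common_positions)
  also have "\<dots> \<le> card (?F ` ?T) * (count_list p1 l + count_list p2 l + count_list p3 l)"
    using sum_bounded_above[OF fiber] by simp
  finally show ?thesis .
qed

text \<open>Occurrences of distinct letters differ in every coordinate, so two of the three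
  coordinates are compared in the same direction; equal profiles are thereby excluded.\<close>
lemma lcs_profile_images_disjoint:
  assumes "l \<noteq> l'"
  shows "lcs_profile p1 p2 p3 ` common_positions p1 p2 p3 l
         \<inter> lcs_profile p1 p2 p3 ` common_positions p1 p2 p3 l' = {}"
proof (rule ccontr)
  assume "\<not> ?thesis"
  then obtain x y where x: "x \<in> common_positions p1 p2 p3 l" and y: "y \<in> common_positions p1 p2 p3 l'"
    and eq: "lcs_profile p1 p2 p3 x = lcs_profile p1 p2 p3 y" by blast
  obtain i j k i' j' k' where xy: "x = (i, j, k)" "y = (i', j', k')" by (metis prod_cases3)
  have "i \<noteq> i'" "j \<noteq> j'" "k \<noteq> k'"
    using x y assms unfolding xy by (auto simp: common_positions_def positions_def)
  moreover have "\<not> below_in_two x y" "\<not> below_in_two y x"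
    using not_below_in_two_if_same_lcs_profile[OF y eq]
      not_below_in_two_if_same_lcs_profile[OF x eq[symmetric]] by simp_all
  ultimately show False unfolding xy by auto
qed

lemma lcs_profile_image_subset:
  "lcs_profile p1 p2 p3 ` common_positions p1 p2 p3 l
     \<subseteq> {1..LCS p1 p2} \<times> {1..LCS p1 p3} \<times> {1..LCS p2 p3}"
proof
  fix z assume "z \<in> lcs_profile p1 p2 p3 ` common_positions p1 p2 p3 l"
  then obtain i j k where "(i, j, k) \<in> common_positions p1 p2 p3 l" and z: "z = lcs_profile p1 p2 p3 (i, j, k)"
    by (metis imageE prod_cases3)
  then have "i < length p1" "j < length p2" "k < length p3" "p1 ! i = l" "p2 ! j = l" "p3 ! k = l"
    by (auto simp: common_positions_def positions_def)
  then have "0 < prefix_LCS p1 p2 i j" "0 < prefix_LCS p1 p3 i k" "0 < prefix_LCS p2 p3 j k"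
    by (simp_all add: prefix_LCS_pos)
  then show "z \<in> {1..LCS p1 p2} \<times> {1..LCS p1 p3} \<times> {1..LCS p2 p3}"
    by (simp add: z prefix_LCS_le_LCS Suc_le_eq)
qed

lemma sum_card_lcs_profiles_le:
  assumes "finite \<Lambda>"
  shows "(\<Sum>l\<in>\<Lambda>. card (lcs_profile p1 p2 p3 ` common_positions p1 p2 p3 l))
           \<le> LCS p1 p2 * LCS p1 p3 * LCS p2 p3"
proof -
  let ?I = "\<lambda>l. lcs_profile p1 p2 p3 ` common_positions p1 p2 p3 l"
  have "(\<Sum>l\<in>\<Lambda>. card (?I l)) = card (\<Union>l\<in>\<Lambda>. ?I l)"
    using assms
    by (intro card_UN_disjoint[symmetric]) (simp_all add: finite_common_positions lcs_profile_images_disjoint)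
  also have "\<dots> \<le> card ({1..LCS p1 p2} \<times> {1..LCS p1 p3} \<times> {1..LCS p2 p3})"
    by (intro card_mono UN_least lcs_profile_image_subset) simp
  finally show ?thesis by (simp add: card_cartesian_product)
qed

lemma sum_squares_le_LCS_product:
  assumes "multiperm k s p1" "multiperm k s p2" "multiperm k s p3"
  shows "(\<Sum>l=1..k. s l ^ 2) \<le> 3 * (LCS p1 p2 * LCS p1 p3 * LCS p2 p3)"
proof -
  let ?I = "\<lambda>l. lcs_profile p1 p2 p3 ` common_positions p1 p2 p3 l"
  have sq: "s l ^ 2 \<le> 3 * card (?I l)" if l: "l \<in> {1..k}" for l
  proof -
    have count: "count_list p l = s l" if "multiperm k s p" for p
      using that l by (simp add: multiperm_def)
    have "s l * s l ^ 2 = card (common_positions p1 p2 p3 l)"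
      by (simp add: common_positions_def card_cartesian_product card_positions count assms
          power2_eq_square)
    also have "\<dots> \<le> card (?I l) * (s l + s l + s l)"
      using card_common_positions_le[of p1 p2 p3 l] by (simp add: count assms)
    also have "\<dots> = s l * (3 * card (?I l))" by simp
    finally show ?thesis by (cases "s l = 0") simp_all
  qed
  have "(\<Sum>l=1..k. s l ^ 2) \<le> (\<Sum>l=1..k. 3 * card (?I l))"
    by (rule sum_mono) (rule sq)
  also have "\<dots> = 3 * (\<Sum>l=1..k. card (?I l))"
    by (rule sum_distrib_left[symmetric])
  also have "\<dots> \<le> 3 * (LCS p1 p2 * LCS p1 p3 * LCS p2 p3)"
    using sum_card_lcs_profiles_le[of "{1..k}" p1 p2 p3] by simp
  finally show ?thesis .
qed

lemma powr_one_third_le: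
  fixes x y :: real
  assumes "0 \<le> x" "0 \<le> y" "x \<le> y ^ 3"
  shows "x powr (1/3) \<le> y"
proof -
  have "x powr (1/3) \<le> (y ^ 3) powr (1/3)" using assms by (intro powr_mono2) auto
  also have "\<dots> = y"
  proof (cases "y = 0")
    case True
    then show ?thesis by simp
  next
    case False
    then have "(y ^ 3) powr (1/3) = (y powr 3) powr (1/3)" using assms(2) by (simp add: powr_realpow)
    also have "\<dots> = y powr (3 * (1/3))" by (rule powr_powr)
    also have "\<dots> = y" using assms(2) by simp
    finally show ?thesis .
  qed
  finally show ?thesis .
qed

theorem theorem11:
  fixes k :: nat and s :: "nat \<Rightarrow> nat" and p1 p2 p3 :: "nat list"
  assumes "\<forall>l\<in>{1..k}. s l \<ge> 1"
    and "multiperm k s p1" and "multiperm k s p2" and "multiperm k s p3"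
  shows "real (LCS p1 p2) \<ge> ((\<Sum>l=1..k. real (s l) ^ 2) / 6) powr (1/3)
       \<or> real (LCS p1 p3) \<ge> ((\<Sum>l=1..k. real (s l) ^ 2) / 6) powr (1/3)
       \<or> real (LCS p2 p3) \<ge> ((\<Sum>l=1..k. real (s l) ^ 2) / 6) powr (1/3)"
proof -
  define L where "L = max (LCS p1 p2) (max (LCS p1 p3) (LCS p2 p3))"
  have "LCS p1 p2 * LCS p1 p3 * LCS p2 p3 \<le> L ^ 3"
    unfolding L_def power3_eq_cube by (intro mult_mono) auto
  with sum_squares_le_LCS_product[OF assms(2-4)]
  have "(\<Sum>l=1..k. s l ^ 2) \<le> 3 * L ^ 3" by linarith
  then have "real (\<Sum>l=1..k. s l ^ 2) \<le> real (3 * L ^ 3)" by (rule of_nat_mono)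
  then have "(\<Sum>l=1..k. real (s l) ^ 2) \<le> 3 * real L ^ 3" by simp
  moreover have "0 \<le> real L ^ 3" by simp
  ultimately have "(\<Sum>l=1..k. real (s l) ^ 2) / 6 \<le> real L ^ 3" by linarith
  then have "((\<Sum>l=1..k. real (s l) ^ 2) / 6) powr (1/3) \<le> real L"
    by (intro powr_one_third_le) (auto intro: sum_nonneg)
  moreover have "L = LCS p1 p2 \<or> L = LCS p1 p3 \<or> L = LCS p2 p3"
    unfolding L_def by (simp add: max_def)
  ultimately show ?thesis by fastforce
qed

end
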